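(* Let $m,d,n\ge1$, $p,q,\lambda>0$, $g(\alpha)=\|\alpha/\lambda\|_p^q$, and let $\mathfrak{D}$ be the set of matrices $D\in\mathbb{R}^{m\times d}$ whose columns all have unit $\ell_2$-norm. For any $X=[x_1,\dots,x_n]\in\mathbb{R}^{m\times n}$ define $$F_X(D)=\frac1n\sum_{i=1}^n\inf_{\alpha\in\mathbb{R}^d}\Big(\tfrac12\|x_i-D\alpha\|_2^2+g(\alpha)\Big),\qquad L_X=\frac1n\sum_{i=1}^n\|x_i\|_2\cdot\lambda\cdot d^{(1-1/p)_+}\Big(\tfrac12\|x_i\|_2^2\Big)^{1/q}.$$ Then for any $X$ and any $D,D'\in\mathfrak{D}$, $$|F_X(D')-F_X(D)|\le L_X\,\|D'-D\|_{1\to2}.$$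
   Context: $(t)_+=\max\{t,0\}$. For a matrix $M$ with columns $m_i$, $\|M\|_{1\to2}=\max_i\|m_i\|_2$. For $0<p<1$, $\|\cdot\|_p$ is the $\ell_p$ quasi-norm. *)

theory Defs
  imports "HOL-Analysis.Analysis"
begin

definition lp_norm :: "real \<Rightarrow> real ^ 'd \<Rightarrow> real" where
  "lp_norm p a = (\<Sum>j\<in>UNIV. \<bar>a $ j\<bar> powr p) powr (1 / p)"

definition penalty :: "real \<Rightarrow> real \<Rightarrow> real \<Rightarrow> real ^ 'd \<Rightarrow> real" where
  "penalty p q lam a = (lp_norm p ((1 / lam) *\<^sub>R a)) powr q"

definition unit_col_dicts :: "(real ^ 'd ^ 'm) set" where
  "unit_col_dicts = {D. \<forall>j. norm (column j D) = 1}"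

definition norm_1_2 :: "real ^ 'd ^ 'm \<Rightarrow> real" where
  "norm_1_2 M = Max (range (\<lambda>j. norm (column j M)))"

definition F_X :: "real \<Rightarrow> real \<Rightarrow> real \<Rightarrow> real ^ 'n ^ 'm \<Rightarrow> real ^ 'd ^ 'm \<Rightarrow> real" where
  "F_X p q lam X D = (1 / real CARD('n)) *
     (\<Sum>i\<in>UNIV. (INF a. (1/2) * (norm (column i X - D *v a))\<^sup>2 + penalty p q lam a))"

definition L_X :: "real \<Rightarrow> real \<Rightarrow> real \<Rightarrow> 'd itself \<Rightarrow> real ^ 'n ^ 'm \<Rightarrow> real" where
  "L_X p q lam _ X = (1 / real CARD('n)) *
     (\<Sum>i\<in>UNIV. norm (column i X) * lam * real CARD('d) powr (max (1 - 1 / p) 0)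
        * ((1/2) * (norm (column i X))\<^sup>2) powr (1 / q))"

end

theory Submission
  imports Defs
begin

text \<open>Fix a signal x and let a be a near-optimal code for D. Comparing with the code 0 gives
  g(a) \<le> |x|^2/2, hence |a|_1 \<le> A(x) = \<lambda> d^((1-1/p)_+) (|x|^2/2)^(1/q), and the residual
  satisfies |x - D a| \<le> |x|. Keeping the same code for D' therefore costs at most
  |x| \<delta> + \<delta>^2/2 more, where \<delta> = A(x) |D' - D|_(1\<rightarrow>2). The quadratic term disappears
  by walking from D to D' in N equal steps (A(x) does not depend on the dictionary) and letting
  N tend to infinity.\<close>

lemma powr_le_self: "0 \<le> t \<Longrightarrow> t \<le> 1 \<Longrightarrow> 1 \<le> p \<Longrightarrow> t powr p \<le> (t::real)"
  by (smt (verit, best) powr_le_one_le powr_nonneg_iff)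

lemma convex_on_nonneg_powr:
  assumes "p \<ge> 1"
  shows "convex_on {0..} (\<lambda>x::real. x powr p)"
proof (rule convex_onI)
  fix t x y :: real
  assume t: "t > 0" "t < 1" and xy: "x \<in> {0..}" "y \<in> {0..}"
  show "((1 - t) *\<^sub>R x + t *\<^sub>R y) powr p \<le> (1 - t) * x powr p + t * y powr p"
  proof (cases "x = 0 \<or> y = 0")
    case True
    then show ?thesis
    proof
      assume "x = 0"
      have "(t * y) powr p = t powr p * y powr p" by (simp add: powr_mult)
      also have "\<dots> \<le> t * y powr p"
        by (rule mult_right_mono) (use powr_le_self[of t p] t assms in auto)
      finally show ?thesis using \<open>x = 0\<close> by simp
    next
      assume "y = 0"
      have "((1 - t) * x) powr p = (1 - t) powr p * x powr p" by (simp add: powr_mult)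
      also have "\<dots> \<le> (1 - t) * x powr p"
        by (rule mult_right_mono) (use powr_le_self[of "1 - t" p] t assms in auto)
      finally show ?thesis using \<open>y = 0\<close> by simp
    qed
  next
    case False
    then show ?thesis using convex_onD[OF powr_convex[OF assms], of t x y] t xy by auto
  qed
qed auto

lemma sum_le_card_powr_mult_sum_powr:
  fixes u :: "'d::finite \<Rightarrow> real"
  assumes u: "\<And>j. u j \<ge> 0" and p: "p \<ge> 1"
  shows "sum u UNIV \<le> real CARD('d) powr (1 - 1/p) * (\<Sum>j\<in>UNIV. u j powr p) powr (1/p)"
proof -
  define d where "d = real CARD('d)"
  define S where "S = (\<Sum>j\<in>UNIV. u j powr p)"
  have d: "d > 0" unfolding d_def by simp
  have "(\<Sum>j\<in>UNIV. (1/d) *\<^sub>R u j) powr p \<le> (\<Sum>j\<in>UNIV. (1/d) * u j powr p)"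
    by (rule convex_on_sum[OF _ _ convex_on_nonneg_powr[OF p]]) (use d u in \<open>auto simp: d_def\<close>)
  then have jensen: "(sum u UNIV / d) powr p \<le> S / d"
    by (simp add: S_def sum_divide_distrib[symmetric] sum_distrib_left[symmetric]
        divide_inverse mult.commute)
  have "sum u UNIV \<ge> 0" using u by (simp add: sum_nonneg)
  then have "sum u UNIV / d = ((sum u UNIV / d) powr p) powr (1/p)"
    using p d by (simp add: powr_powr)
  also have "\<dots> \<le> (S / d) powr (1/p)"
    by (rule powr_mono2) (use jensen p in auto)
  finally have "sum u UNIV \<le> d * (S / d) powr (1/p)"
    using d by (simp add: divide_le_eq mult.commute)
  also have "\<dots> = d powr (1 - 1/p) * S powr (1/p)"
    using d by (simp add: powr_divide powr_diff)
  finally show ?thesis unfolding d_def S_def .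
qed

lemma sum_le_sum_powr_powr:
  fixes u :: "'d::finite \<Rightarrow> real"
  assumes u: "\<And>j. u j \<ge> 0" and p: "0 < p" "p \<le> 1"
  shows "sum u UNIV \<le> (\<Sum>j\<in>UNIV. u j powr p) powr (1/p)"
proof -
  define S where "S = (\<Sum>j\<in>UNIV. u j powr p)"
  have S: "S \<ge> 0" unfolding S_def by (simp add: sum_nonneg)
  have u_le: "u j \<le> S powr (1/p)" for j
  proof -
    have "u j = (u j powr p) powr (1/p)" using u[of j] p by (simp add: powr_powr)
    also have "\<dots> \<le> S powr (1/p)"
      by (rule powr_mono2) (use p in \<open>auto simp: S_def intro!: member_le_sum\<close>)
    finally show ?thesis .
  qed
  have "u j \<le> u j powr p * (S powr (1/p)) powr (1 - p)" for j
  proof -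
    have "u j = u j powr p * u j powr (1 - p)"
      using u[of j] by (simp flip: powr_add)
    also have "\<dots> \<le> u j powr p * (S powr (1/p)) powr (1 - p)"
      by (rule mult_left_mono, rule powr_mono2) (use p u u_le in auto)
    finally show ?thesis .
  qed
  then have "sum u UNIV \<le> (\<Sum>j\<in>UNIV. u j powr p * (S powr (1/p)) powr (1 - p))"
    by (rule sum_mono)
  also have "\<dots> = S powr 1 * S powr ((1 - p)/p)"
    using S by (simp add: S_def sum_distrib_right powr_powr)
  also have "\<dots> = S powr (1 + (1 - p)/p)"
    by (rule powr_add[symmetric])
  also have "1 + (1 - p)/p = 1/p"
    using p by (simp add: field_simps)
  finally show ?thesis unfolding S_def .
qed

lemma sum_abs_le_lp_norm:
  fixes a :: "real ^ 'd"
  assumes "p > 0"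
  shows "(\<Sum>j\<in>UNIV. \<bar>a $ j\<bar>) \<le> real CARD('d) powr (max (1 - 1/p) 0) * lp_norm p a"
proof (cases "p \<ge> 1")
  case True
  then have "max (1 - 1/p) 0 = 1 - 1/p" by (simp add: field_simps)
  then show ?thesis
    using sum_le_card_powr_mult_sum_powr[of "\<lambda>j. \<bar>a $ j\<bar>" p] True by (simp add: lp_norm_def)
next
  case False
  then have "max (1 - 1/p) 0 = 0" using assms by (simp add: field_simps)
  then show ?thesis
    using sum_le_sum_powr_powr[of "\<lambda>j. \<bar>a $ j\<bar>" p] False assms by (simp add: lp_norm_def)
qed

lemma lp_norm_scaleR:
  fixes a :: "real ^ 'd"
  assumes "p > 0"
  shows "lp_norm p (c *\<^sub>R a) = \<bar>c\<bar> * lp_norm p a"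
proof -
  have "(\<Sum>j\<in>UNIV. \<bar>(c *\<^sub>R a) $ j\<bar> powr p) = \<bar>c\<bar> powr p * (\<Sum>j\<in>UNIV. \<bar>a $ j\<bar> powr p)"
    by (simp add: abs_mult powr_mult sum_distrib_left)
  then show ?thesis
    using assms by (simp add: lp_norm_def powr_mult powr_powr)
qed

lemma sum_abs_le_of_penalty_le:
  fixes a :: "real ^ 'd"
  assumes p: "p > 0" and q: "q > 0" and lam: "lam > 0"
    and "penalty p q lam a \<le> K"
  shows "(\<Sum>j\<in>UNIV. \<bar>a $ j\<bar>) \<le> lam * real CARD('d) powr (max (1 - 1/p) 0) * K powr (1/q)"
proof -
  define l where "l = lp_norm p ((1/lam) *\<^sub>R a)"
  have "l \<ge> 0" unfolding l_def lp_norm_def by simp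
  then have "l = (l powr q) powr (1/q)" using q by (simp add: powr_powr)
  also have "\<dots> \<le> K powr (1/q)"
    by (rule powr_mono2) (use assms in \<open>auto simp: penalty_def l_def\<close>)
  finally have "lp_norm p a \<le> lam * K powr (1/q)"
    using lam lp_norm_scaleR[OF p, of "1/lam" a] by (simp add: l_def field_simps)
  then have "real CARD('d) powr (max (1 - 1/p) 0) * lp_norm p a
      \<le> real CARD('d) powr (max (1 - 1/p) 0) * (lam * K powr (1/q))"
    by (rule mult_left_mono) simp
  from order_trans[OF sum_abs_le_lp_norm[OF p, of a] this] show ?thesis
    by (simp add: mult_ac)
qed

lemma norm_mult_vec_le_sum_abs:
  fixes M :: "real ^ 'd ^ 'm"
  assumes "\<And>j. norm (column j M) \<le> B"
  shows "norm (M *v a) \<le> (\<Sum>j\<in>UNIV. \<bar>a $ j\<bar>) * B"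
proof -
  have "norm (M *v a) = norm (\<Sum>j\<in>UNIV. a $ j *\<^sub>R column j M)"
    by (simp add: matrix_mult_sum scalar_mult_eq_scaleR)
  also have "\<dots> \<le> (\<Sum>j\<in>UNIV. \<bar>a $ j\<bar> * norm (column j M))"
    by (rule order_trans[OF norm_sum]) simp
  also have "\<dots> \<le> (\<Sum>j\<in>UNIV. \<bar>a $ j\<bar> * B)"
    by (rule sum_mono) (simp add: assms mult_left_mono)
  finally show ?thesis by (simp add: sum_distrib_right)
qed

definition coding_loss :: "real \<Rightarrow> real \<Rightarrow> real \<Rightarrow> real ^ 'd ^ 'm \<Rightarrow> real ^ 'm \<Rightarrow> real ^ 'd \<Rightarrow> real" where
  "coding_loss p q lam D x a = (1/2) * (norm (x - D *v a))\<^sup>2 + penalty p q lam a"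

definition coding_cost :: "real \<Rightarrow> real \<Rightarrow> real \<Rightarrow> real ^ 'd ^ 'm \<Rightarrow> real ^ 'm \<Rightarrow> real" where
  "coding_cost p q lam D x = (INF a. coding_loss p q lam D x a)"

definition code_l1_radius :: "real \<Rightarrow> real \<Rightarrow> real \<Rightarrow> 'd itself \<Rightarrow> real ^ 'm \<Rightarrow> real" where
  "code_l1_radius p q lam _ x =
     lam * real CARD('d) powr (max (1 - 1/p) 0) * ((1/2) * (norm x)\<^sup>2) powr (1/q)"

lemma penalty_nonneg: "penalty p q lam a \<ge> 0"
  by (simp add: penalty_def)

lemma bdd_below_coding_loss: "bdd_below (range (coding_loss p q lam D x))"
  by (rule bdd_belowI[of _ 0]) (auto simp: coding_loss_def penalty_nonneg)

lemma coding_cost_le_loss: "coding_cost p q lam D x \<le> coding_loss p q lam D x a"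
  unfolding coding_cost_def by (rule cINF_lower[OF bdd_below_coding_loss]) simp

lemma coding_loss_zero: "coding_loss p q lam D x 0 = (1/2) * (norm x)\<^sup>2"
  by (simp add: coding_loss_def penalty_def lp_norm_def)

lemma exists_near_optimal_code:
  assumes "e > 0"
  obtains a where "coding_loss p q lam D x a \<le> coding_cost p q lam D x + e"
    and "coding_loss p q lam D x a \<le> (1/2) * (norm x)\<^sup>2"
proof (cases "coding_cost p q lam D x = (1/2) * (norm x)\<^sup>2")
  case True
  then show ?thesis using that[of 0] assms by (simp add: coding_loss_zero)
next
  case False
  with coding_cost_le_loss[of p q lam D x 0]
  have "coding_cost p q lam D x < (1/2) * (norm x)\<^sup>2" by (simp add: coding_loss_zero)
  then have "coding_cost p q lam D x
      < coding_cost p q lam D x + min e ((1/2) * (norm x)\<^sup>2 - coding_cost p q lam D x)"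
    using assms by simp
  then obtain a where
    "coding_loss p q lam D x a
       < coding_cost p q lam D x + min e ((1/2) * (norm x)\<^sup>2 - coding_cost p q lam D x)"
    using cINF_less_iff[of UNIV "coding_loss p q lam D x", OF _ bdd_below_coding_loss]
    unfolding coding_cost_def by blast
  then show ?thesis using that[of a] by linarith
qed

lemma coding_cost_perturb_le:
  fixes D D' :: "real ^ 'd ^ 'm" and x :: "real ^ 'm"
  assumes p: "p > 0" and q: "q > 0" and lam: "lam > 0"
    and B: "\<And>j. norm (column j (D' - D)) \<le> B" and "B \<ge> 0"
  defines "\<delta> \<equiv> code_l1_radius p q lam TYPE('d) x * B"
  shows "coding_cost p q lam D' x \<le> coding_cost p q lam D x + norm x * \<delta> + \<delta>\<^sup>2 / 2"
proof (rule field_le_epsilon)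
  fix e :: real
  assume "e > 0"
  then obtain a where near: "coding_loss p q lam D x a \<le> coding_cost p q lam D x + e"
    and small: "coding_loss p q lam D x a \<le> (1/2) * (norm x)\<^sup>2"
    by (rule exists_near_optimal_code)
  define r where "r = x - D *v a"
  have "penalty p q lam a \<le> (1/2) * (norm x)\<^sup>2"
    using small zero_le_power2[of "norm r"] unfolding coding_loss_def r_def by linarith
  then have "(\<Sum>j\<in>UNIV. \<bar>a $ j\<bar>) \<le> code_l1_radius p q lam TYPE('d) x"
    unfolding code_l1_radius_def by (rule sum_abs_le_of_penalty_le[OF p q lam])
  then have "(\<Sum>j\<in>UNIV. \<bar>a $ j\<bar>) * B \<le> \<delta>"
    unfolding \<delta>_def using \<open>B \<ge> 0\<close> by (rule mult_right_mono)
  with norm_mult_vec_le_sum_abs[OF B, of a] have shift: "norm ((D' - D) *v a) \<le> \<delta>"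
    by linarith
  have "(norm r)\<^sup>2 \<le> (norm x)\<^sup>2"
    using small penalty_nonneg[of p q lam a] unfolding coding_loss_def r_def by linarith
  then have residual: "norm r \<le> norm x" by (rule power2_le_imp_le) simp
  have "x - D' *v a = r - (D' - D) *v a"
    by (simp add: r_def matrix_vector_mult_diff_rdistrib)
  then have "norm (x - D' *v a) \<le> norm r + norm ((D' - D) *v a)"
    by (simp add: norm_triangle_ineq4)
  also have "\<dots> \<le> norm r + \<delta>" using shift by simp
  finally have "(norm (x - D' *v a))\<^sup>2 \<le> (norm r + \<delta>)\<^sup>2" by (simp add: power_mono)
  also have "\<dots> \<le> (norm r)\<^sup>2 + 2 * norm x * \<delta> + \<delta>\<^sup>2"
  proof -
    have "\<delta> \<ge> 0" using shift norm_ge_zero order_trans by blast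
    then have "norm r * \<delta> \<le> norm x * \<delta>" using residual by (rule mult_right_mono[rotated])
    then show ?thesis by (simp add: power2_sum)
  qed
  finally have "coding_loss p q lam D' x a \<le> coding_loss p q lam D x a + norm x * \<delta> + \<delta>\<^sup>2 / 2"
    unfolding coding_loss_def r_def by linarith
  then show "coding_cost p q lam D' x \<le> coding_cost p q lam D x + norm x * \<delta> + \<delta>\<^sup>2 / 2 + e"
    using near coding_cost_le_loss[of p q lam D' x a] by linarith
qed

lemma coding_cost_le_subdivided:
  fixes D D' :: "real ^ 'd ^ 'm" and x :: "real ^ 'm"
  assumes p: "p > 0" and q: "q > 0" and lam: "lam > 0"
    and C: "\<And>j. norm (column j (D' - D)) \<le> C" and "C \<ge> 0" and "N > 0"
  defines "\<delta> \<equiv> code_l1_radius p q lam TYPE('d) x * C"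
  shows "coding_cost p q lam D' x \<le> coding_cost p q lam D x + norm x * \<delta> + \<delta>\<^sup>2 / (2 * real N)"
proof -
  define P where "P k = D + (real k / real N) *\<^sub>R (D' - D)" for k
  define c where "c = C / real N"
  define \<epsilon> where "\<epsilon> = code_l1_radius p q lam TYPE('d) x * c"
  have step: "norm (column j (P (Suc k) - P k)) \<le> c" for j k
  proof -
    have "P (Suc k) - P k = (1 / real N) *\<^sub>R (D' - D)"
      using \<open>N > 0\<close> by (simp add: P_def algebra_simps add_divide_distrib)
    then have "column j (P (Suc k) - P k) = (1 / real N) *\<^sub>R column j (D' - D)"
      by (simp add: column_def vec_eq_iff)
    then show ?thesis
      using C[of j] \<open>N > 0\<close> by (simp add: c_def divide_right_mono)
  qed
  have "coding_cost p q lam (P k) x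
      \<le> coding_cost p q lam D x + real k * (norm x * \<epsilon> + \<epsilon>\<^sup>2 / 2)" for k
  proof (induction k)
    case 0
    then show ?case by (simp add: P_def)
  next
    case (Suc k)
    have "coding_cost p q lam (P (Suc k)) x \<le> coding_cost p q lam (P k) x + norm x * \<epsilon> + \<epsilon>\<^sup>2 / 2"
      unfolding \<epsilon>_def using \<open>C \<ge> 0\<close> by (intro coding_cost_perturb_le[OF p q lam step]) (simp add: c_def)
    moreover have "real (Suc k) * (norm x * \<epsilon> + \<epsilon>\<^sup>2 / 2)
        = real k * (norm x * \<epsilon> + \<epsilon>\<^sup>2 / 2) + (norm x * \<epsilon> + \<epsilon>\<^sup>2 / 2)"
      by (simp add: algebra_simps)
    ultimately show ?case using Suc.IH by linarith
  qed
  from this[of N] have "coding_cost p q lam D' x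
      \<le> coding_cost p q lam D x + real N * (norm x * \<epsilon> + \<epsilon>\<^sup>2 / 2)"
    using \<open>N > 0\<close> by (simp add: P_def)
  also have "real N * (norm x * \<epsilon> + \<epsilon>\<^sup>2 / 2) = norm x * \<delta> + \<delta>\<^sup>2 / (2 * real N)"
    using \<open>N > 0\<close> by (simp add: \<epsilon>_def \<delta>_def c_def field_simps power2_eq_square)
  finally show ?thesis by (simp add: add.assoc)
qed

lemma coding_cost_le_lipschitz:
  fixes D D' :: "real ^ 'd ^ 'm"
  assumes "p > 0" and "q > 0" and "lam > 0"
    and "\<And>j. norm (column j (D' - D)) \<le> C" and "C \<ge> 0"
  shows "coding_cost p q lam D' x
           \<le> coding_cost p q lam D x + norm x * code_l1_radius p q lam TYPE('d) x * C"
proof -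
  define \<delta> where "\<delta> = code_l1_radius p q lam TYPE('d) x * C"
  define c where "c = coding_cost p q lam D x + norm x * \<delta>"
  define b where "b = \<delta>\<^sup>2 / 2"
  have "(\<lambda>N. c + b / real N) \<longlonglongrightarrow> c"
    using tendsto_add[OF tendsto_const[of c] lim_const_over_n[of b]] by simp
  moreover have "coding_cost p q lam D' x \<le> c + b / real N" if "N \<ge> 1" for N
    using coding_cost_le_subdivided[OF assms, of N x] that by (simp add: \<delta>_def c_def b_def)
  ultimately have "coding_cost p q lam D' x \<le> c"
    by (intro LIMSEQ_le_const) auto
  then show ?thesis by (simp add: c_def \<delta>_def mult.assoc)
qed

lemma abs_coding_cost_diff_le:
  fixes D D' :: "real ^ 'd ^ 'm"
  assumes "p > 0" and "q > 0" and "lam > 0"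
    and C: "\<And>j. norm (column j (D' - D)) \<le> C" and "C \<ge> 0"
  shows "\<bar>coding_cost p q lam D' x - coding_cost p q lam D x\<bar>
           \<le> norm x * code_l1_radius p q lam TYPE('d) x * C"
proof -
  have "column j (D - D') = - column j (D' - D)" for j
    by (simp add: column_def vec_eq_iff)
  with C have "norm (column j (D - D')) \<le> C" for j
    by simp
  from coding_cost_le_lipschitz[OF assms(1-3) this \<open>C \<ge> 0\<close>, of x]
    coding_cost_le_lipschitz[OF assms, of x]
  show ?thesis by linarith
qed

theorem lemma1:
  fixes p q lam :: real
    and X :: "real ^ 'n ^ 'm"
    and D D' :: "real ^ 'd ^ 'm"
  assumes "p > 0" and "q > 0" and "lam > 0"
    and "D \<in> unit_col_dicts" and "D' \<in> unit_col_dicts"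
  shows "\<bar>F_X p q lam X D' - F_X p q lam X D\<bar>
           \<le> L_X p q lam TYPE('d) X * norm_1_2 (D' - D)"
proof -
  define C where "C = norm_1_2 (D' - D)"
  have C: "norm (column j (D' - D)) \<le> C" for j
    unfolding C_def norm_1_2_def by (rule Max_ge) auto
  then have "C \<ge> 0" using norm_ge_zero order_trans by blast
  define cost where "cost E i = coding_cost p q lam E (column i X)" for E :: "real ^ 'd ^ 'm" and i
  have F: "F_X p q lam X E = (1 / real CARD('n)) * (\<Sum>i\<in>UNIV. cost E i)" for E
    by (simp add: F_X_def cost_def coding_cost_def coding_loss_def)
  have "\<bar>F_X p q lam X D' - F_X p q lam X D\<bar>
      = (1 / real CARD('n)) * \<bar>\<Sum>i\<in>UNIV. cost D' i - cost D i\<bar>"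
    by (simp add: F sum_subtractf diff_divide_distrib[symmetric] abs_divide)
  also have "\<dots> \<le> (1 / real CARD('n)) * (\<Sum>i\<in>UNIV. \<bar>cost D' i - cost D i\<bar>)"
    by (rule mult_left_mono[OF sum_abs]) simp
  also have "\<dots> \<le> (1 / real CARD('n))
                   * (\<Sum>i\<in>UNIV. norm (column i X) * code_l1_radius p q lam TYPE('d) (column i X) * C)"
    using abs_coding_cost_diff_le[OF assms(1-3) C \<open>C \<ge> 0\<close>]
    by (intro mult_left_mono sum_mono) (simp_all add: cost_def)
  also have "\<dots> = L_X p q lam TYPE('d) X * norm_1_2 (D' - D)"
    by (simp add: L_X_def code_l1_radius_def C_def sum_distrib_left sum_distrib_right mult_ac)
  finally show ?thesis .
qed

end
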